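(* Let $\alpha\in\mathbb{S}_r$, $\beta\in\mathbb{S}_s$ with $\alpha\succ0$, $\beta\succ0$, and let $\sigma\in\mathbb{A}_r$, $\tau\in\mathbb{A}_s$. Consider the self-adjoint linear operator $\Phi:\mathbb{R}^{r\times s}\to\mathbb{R}^{r\times s}$, $\Phi(X):=\alpha X\beta+\sigma X\tau$, on the Hilbert space $\mathbb{R}^{r\times s}$ with the Frobenius inner product $\langle X,Y\rangle=\mathrm{Tr}(X^{T}Y)$. Then $\Phi$ is positive semi-definite if and only if $$\rho(\alpha^{-1}\sigma)\,\rho(\tau\beta^{-1})\le 1,$$ where $\rho(\cdot)$ denotes the spectral radius.
   Context: $\mathbb{S}_k$ and $\mathbb{A}_k$ denote the spaces of real symmetric and real antisymmetric $k\times k$ matrices, respectively. *)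

theory Defs
  imports "Jordan_Normal_Form.Spectral_Radius" "Jordan_Normal_Form.Gauss_Jordan_Elimination"
begin

definition mat_trace :: "'a :: comm_ring_1 mat \<Rightarrow> 'a" where
  "mat_trace A = (\<Sum>i<dim_row A. A $$ (i, i))"

definition frob_inner :: "real mat \<Rightarrow> real mat \<Rightarrow> real" where
  "frob_inner X Y = mat_trace (transpose_mat X * Y)"

definition sym_mat :: "nat \<Rightarrow> real mat \<Rightarrow> bool" where
  "sym_mat n A \<longleftrightarrow> A \<in> carrier_mat n n \<and> transpose_mat A = A"

definition antisym_mat :: "nat \<Rightarrow> real mat \<Rightarrow> bool" where
  "antisym_mat n A \<longleftrightarrow> A \<in> carrier_mat n n \<and> transpose_mat A = - A"

definition pos_def_mat :: "nat \<Rightarrow> real mat \<Rightarrow> bool" where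
  "pos_def_mat n A \<longleftrightarrow> A \<in> carrier_mat n n \<and>
     (\<forall>v \<in> carrier_vec n. v \<noteq> 0\<^sub>v n \<longrightarrow> v \<bullet> (A *\<^sub>v v) > 0)"

definition inv_mat :: "real mat \<Rightarrow> real mat" where
  "inv_mat A = the (mat_inverse A)"

definition real_spectral_radius :: "real mat \<Rightarrow> real" where
  "real_spectral_radius A = spectral_radius (map_mat complex_of_real A)"

definition Phi_op :: "real mat \<Rightarrow> real mat \<Rightarrow> real mat \<Rightarrow> real mat \<Rightarrow> real mat \<Rightarrow> real mat" where
  "Phi_op \<alpha> \<beta> \<sigma> \<tau> X = \<alpha> * X * \<beta> + \<sigma> * X * \<tau>"

definition psd_op :: "nat \<Rightarrow> nat \<Rightarrow> (real mat \<Rightarrow> real mat) \<Rightarrow> bool" where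
  "psd_op r s \<Phi> \<longleftrightarrow> (\<forall>X \<in> carrier_mat r s. frob_inner X (\<Phi> X) \<ge> 0)"

end

theory Submission
  imports Defs
begin

text \<open>Put \<open>M = \<alpha>\<inverse> \<sigma>\<close> and \<open>N = \<tau> \<beta>\<inverse>\<close>, so that \<open>\<sigma> X \<tau> = \<alpha> (M X N) \<beta>\<close>. For the inner product
  \<open>h(Y, Z) = \<langle>Y, \<alpha> Z \<beta>\<rangle>\<close> the map \<open>X \<mapsto> M X N\<close> is self-adjoint because \<sigma> and \<tau> are
  antisymmetric. Hence Cauchy-Schwarz gives \<open>h(X, M X N)\<^sup>2 \<le> h(X, X) h(X, M\<^sup>2 X N\<^sup>2)\<close>, and iterating
  this against the growth \<open>(\<rho>(M) \<rho>(N) + \<epsilon>)\<^sup>k\<close> of \<open>h(X, M\<^sup>k X N\<^sup>k)\<close> yields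
  \<open>|\<langle>X, \<sigma> X \<tau>\<rangle>| \<le> \<rho>(M) \<rho>(N) \<langle>X, \<alpha> X \<beta>\<rangle>\<close>, which proves sufficiency.
  Conversely, the eigenvalues of \<open>M\<close> and \<open>N\<close> are purely imaginary; real and imaginary parts of
  eigenvectors for eigenvalues of maximal modulus span two planes, and two rank-two matrices built
  from them have \<open>\<Phi>\<close>-values summing to \<open>(1 - \<rho>(M) \<rho>(N))\<close> times a positive number.\<close>

definition entry_inner :: "nat \<Rightarrow> nat \<Rightarrow> real mat \<Rightarrow> real mat \<Rightarrow> real" where
  "entry_inner r s X Y = (\<Sum>a<r. \<Sum>j<s. X $$ (a, j) * Y $$ (a, j))"

lemma frob_inner_eq_entry_inner:
  assumes "X \<in> carrier_mat r s" "Y \<in> carrier_mat r s"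
  shows "frob_inner X Y = entry_inner r s X Y"
proof -
  have "frob_inner X Y = (\<Sum>j<s. \<Sum>a<r. X $$ (a, j) * Y $$ (a, j))"
    unfolding frob_inner_def mat_trace_def using assms
    by (auto simp: scalar_prod_def atLeast0LessThan intro!: sum.cong)
  also have "\<dots> = entry_inner r s X Y" unfolding entry_inner_def by (rule sum.swap)
  finally show ?thesis .
qed

lemma entry_inner_commute: "entry_inner r s X Y = entry_inner r s Y X"
  unfolding entry_inner_def by (simp add: mult.commute)

lemma entry_inner_add_right:
  assumes "Y \<in> carrier_mat r s" "Z \<in> carrier_mat r s"
  shows "entry_inner r s X (Y + Z) = entry_inner r s X Y + entry_inner r s X Z"
  unfolding entry_inner_def using assms by (auto simp: distrib_left sum.distrib intro!: sum.cong)

lemma entry_inner_add_left: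
  assumes "Y \<in> carrier_mat r s" "Z \<in> carrier_mat r s"
  shows "entry_inner r s (Y + Z) X = entry_inner r s Y X + entry_inner r s Z X"
  using entry_inner_add_right[OF assms, of X] by (simp add: entry_inner_commute)

lemma entry_inner_smult_right:
  assumes "Y \<in> carrier_mat r s"
  shows "entry_inner r s X (c \<cdot>\<^sub>m Y) = c * entry_inner r s X Y"
  unfolding entry_inner_def using assms by (auto simp: sum_distrib_left mult.left_commute intro!: sum.cong)

lemma entry_inner_mult_left:
  assumes "X \<in> carrier_mat r s" "P \<in> carrier_mat r r'" "Y \<in> carrier_mat r' s"
  shows "entry_inner r s X (P * Y) = entry_inner r' s (transpose_mat P * X) Y"
proof -
  have "entry_inner r s X (P * Y) = (\<Sum>a<r. \<Sum>j<s. \<Sum>b<r'. X $$ (a, j) * P $$ (a, b) * Y $$ (b, j))"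
    unfolding entry_inner_def using assms
    by (auto simp: scalar_prod_def atLeast0LessThan sum_distrib_left mult.assoc intro!: sum.cong)
  also have "\<dots> = (\<Sum>b<r'. \<Sum>j<s. \<Sum>a<r. X $$ (a, j) * P $$ (a, b) * Y $$ (b, j))"
    by (subst sum.swap, subst (2) sum.swap, subst sum.swap) (simp add: sum.swap[of _ "{..<r}"])
  also have "\<dots> = entry_inner r' s (transpose_mat P * X) Y"
    unfolding entry_inner_def using assms
    by (auto simp: scalar_prod_def atLeast0LessThan sum_distrib_left sum_distrib_right ac_simps intro!: sum.cong)
  finally show ?thesis .
qed

lemma entry_inner_mult_right:
  assumes "X \<in> carrier_mat r s" "Y \<in> carrier_mat r s'" "R \<in> carrier_mat s' s"
  shows "entry_inner r s X (Y * R) = entry_inner r s' (X * transpose_mat R) Y"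
proof -
  have "entry_inner r s X (Y * R) = (\<Sum>a<r. \<Sum>j<s. \<Sum>k<s'. X $$ (a, j) * Y $$ (a, k) * R $$ (k, j))"
    unfolding entry_inner_def using assms
    by (auto simp: scalar_prod_def atLeast0LessThan sum_distrib_left mult.assoc intro!: sum.cong)
  also have "\<dots> = (\<Sum>a<r. \<Sum>k<s'. \<Sum>j<s. X $$ (a, j) * Y $$ (a, k) * R $$ (k, j))"
    by (rule sum.cong[OF refl], rule sum.swap)
  also have "\<dots> = entry_inner r s' (X * transpose_mat R) Y"
    unfolding entry_inner_def using assms
    by (auto simp: scalar_prod_def atLeast0LessThan sum_distrib_left sum_distrib_right ac_simps intro!: sum.cong)
  finally show ?thesis .
qed

lemma entry_inner_abs_le:
  assumes "X \<in> carrier_mat r s" "Z \<in> carrier_mat r s" "norm_bound X bx" "norm_bound Z bz"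
  shows "\<bar>entry_inner r s X Z\<bar> \<le> real r * real s * bx * bz"
proof -
  have "\<bar>X $$ (a, j) * Z $$ (a, j)\<bar> \<le> bx * bz" if "a < r" "j < s" for a j
    using assms that unfolding norm_bound_def abs_mult
    by (auto intro!: mult_mono order.trans[OF abs_ge_zero])
  then have "(\<Sum>a<r. \<Sum>j<s. \<bar>X $$ (a, j) * Z $$ (a, j)\<bar>) \<le> (\<Sum>a<r. \<Sum>j<s. bx * bz)"
    by (intro sum_mono) auto
  moreover have "\<bar>entry_inner r s X Z\<bar> \<le> (\<Sum>a<r. \<Sum>j<s. \<bar>X $$ (a, j) * Z $$ (a, j)\<bar>)"
    unfolding entry_inner_def by (rule order.trans[OF sum_abs], rule sum_mono, rule sum_abs)
  ultimately show ?thesis by simp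
qed

lemma pos_def_mat_carrier: "pos_def_mat n A \<Longrightarrow> A \<in> carrier_mat n n"
  unfolding pos_def_mat_def by simp

lemma pos_def_mat_quad_nonneg:
  assumes "pos_def_mat n A" "v \<in> carrier_vec n"
  shows "v \<bullet> (A *\<^sub>v v) \<ge> 0"
  using assms pos_def_mat_carrier[OF assms(1)] unfolding pos_def_mat_def
  by (cases "v = 0\<^sub>v n") auto

lemma pos_def_mat_quad_add_pos:
  assumes "pos_def_mat n A" "p \<in> carrier_vec n" "q \<in> carrier_vec n" "p \<noteq> 0\<^sub>v n \<or> q \<noteq> 0\<^sub>v n"
  shows "p \<bullet> (A *\<^sub>v p) + q \<bullet> (A *\<^sub>v q) > 0"
  using assms pos_def_mat_quad_nonneg[OF assms(1)] unfolding pos_def_mat_def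
  by (metis add_pos_nonneg add_nonneg_pos)

lemma pos_def_mat_inv:
  assumes "pos_def_mat n A"
  shows "inv_mat A \<in> carrier_mat n n" "A * inv_mat A = 1\<^sub>m n" "inv_mat A * A = 1\<^sub>m n"
proof -
  have A: "A \<in> carrier_mat n n" by (rule pos_def_mat_carrier[OF assms])
  have "v = 0\<^sub>v n" if "v \<in> carrier_vec n" "A *\<^sub>v v = 0\<^sub>v n" for v
    using assms that unfolding pos_def_mat_def by force
  then have "det A \<noteq> 0" using det_0_iff_vec_prod_zero[OF A] by auto
  then have "A \<in> Units (ring_mat TYPE(real) n ())" by (rule det_non_zero_imp_unit[OF A])
  then obtain B where B: "mat_inverse A = Some B"
    using mat_inverse(1)[OF A, of "()"] by (cases "mat_inverse A") auto
  from mat_inverse(2)[OF A B] B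
  show "inv_mat A \<in> carrier_mat n n" "A * inv_mat A = 1\<^sub>m n" "inv_mat A * A = 1\<^sub>m n"
    unfolding inv_mat_def by auto
qed

definition quad_form :: "nat \<Rightarrow> (nat \<Rightarrow> nat \<Rightarrow> real) \<Rightarrow> (nat \<Rightarrow> real) \<Rightarrow> real" where
  "quad_form n B v = (\<Sum>i<n. \<Sum>j<n. v i * B i j * v j)"

lemma quad_form_eq_scalar_prod:
  assumes "M \<in> carrier_mat n n"
  shows "quad_form n (\<lambda>i j. M $$ (i, j)) v = vec n v \<bullet> (M *\<^sub>v vec n v)"
  using assms unfolding quad_form_def
  by (auto simp: scalar_prod_def mult_mat_vec_def atLeast0LessThan sum_distrib_left ac_simps
      intro!: sum.cong)

lemma quad_form_restrict: "quad_form (Suc n) B (v(n := 0)) = quad_form n B v"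
  unfolding quad_form_def by (auto intro!: sum.cong)

lemma quad_form_Suc:
  assumes "\<And>j. j < n \<Longrightarrow> B n j = B j n"
  shows "quad_form (Suc n) B w = quad_form n B w + 2 * w n * (\<Sum>j<n. B j n * w j) + B n n * (w n)\<^sup>2"
proof -
  have "(\<Sum>j<n. w n * B n j * w j) = (\<Sum>j<n. w j * B j n * w n)"
    using assms by (intro sum.cong) auto
  then show ?thesis
    unfolding quad_form_def
    by (simp add: sum.distrib sum_distrib_left power2_eq_square algebra_simps)
qed

lemma quad_form_pos_diag:
  assumes "\<And>v. (\<exists>i<n. v i \<noteq> 0) \<Longrightarrow> quad_form n B v > 0" "k < n"
  shows "B k k > 0"
proof -
  have "(\<Sum>j<n. of_bool (i = k) * B i j * of_bool (j = k)) = of_bool (i = k) * B i k" for i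
    using assms(2) by (simp add: sum.delta' flip: sum_distrib_left)
  then have "quad_form n B (\<lambda>i. of_bool (i = k)) = B k k"
    using assms(2) unfolding quad_form_def by (simp add: sum.delta' mult.commute[of "of_bool _"])
  moreover have "quad_form n B (\<lambda>i. of_bool (i = k)) > 0" by (rule assms(1)) (use assms(2) in auto)
  ultimately show ?thesis by simp
qed

lemma schur_complement_pos:
  fixes B :: "nat \<Rightarrow> nat \<Rightarrow> real"
  assumes sym: "\<And>i j. i < Suc n \<Longrightarrow> j < Suc n \<Longrightarrow> B i j = B j i"
    and pos: "\<And>w. (\<exists>i<Suc n. w i \<noteq> 0) \<Longrightarrow> quad_form (Suc n) B w > 0"
    and v: "\<exists>i<n. v i \<noteq> 0"
  shows "quad_form n (\<lambda>i j. B i j - B i n * B j n / B n n) v > 0"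
proof -
  define b where "b = B n n"
  define c where "c = (\<Sum>j<n. B j n * v j)"
  define w where "w = v(n := - c / b)"
  have b: "b > 0" unfolding b_def by (rule quad_form_pos_diag[OF pos]) auto
  have "quad_form n (\<lambda>i j. B i j - B i n * B j n / b) v =
      quad_form n B v - (\<Sum>i<n. v i * B i n) * (\<Sum>j<n. B j n * v j) / b"
    unfolding quad_form_def
    by (simp add: sum_subtractf sum_product sum_divide_distrib algebra_simps)
  also have "\<dots> = quad_form n B w + 2 * w n * (\<Sum>j<n. B j n * w j) + B n n * (w n)\<^sup>2"
  proof -
    have "quad_form n B w = quad_form n B v" "(\<Sum>j<n. B j n * w j) = c"
      unfolding quad_form_def c_def w_def by (auto intro!: sum.cong)
    moreover have "(\<Sum>i<n. v i * B i n) = c" unfolding c_def by (simp add: mult.commute)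
    ultimately show ?thesis
      using b unfolding w_def b_def by (simp add: field_simps power2_eq_square)
  qed
  also have "\<dots> = quad_form (Suc n) B w" using sym by (simp add: quad_form_Suc)
  also have "\<dots> > 0" using v unfolding w_def by (intro pos) auto
  finally show ?thesis unfolding b_def .
qed

text \<open>Splitting off the last row and column, B is the rank-one matrix (B i n * B j n) / B n n
  plus its Schur complement, which vanishes on the last row and column.\<close>

lemma sum_mult_psd_pd_nonneg:
  fixes G B :: "nat \<Rightarrow> nat \<Rightarrow> real"
  assumes "\<And>v. quad_form n G v \<ge> 0"
    and "\<And>i j. i < n \<Longrightarrow> j < n \<Longrightarrow> B i j = B j i"
    and "\<And>v. (\<exists>i<n. v i \<noteq> 0) \<Longrightarrow> quad_form n B v > 0"
  shows "(\<Sum>i<n. \<Sum>j<n. G i j * B i j) \<ge> 0"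
  using assms
proof (induction n arbitrary: G B)
  case 0
  then show ?case by simp
next
  case (Suc n)
  define b where "b = B n n"
  define B' where "B' i j = B i j - B i n * B j n / b" for i j
  have b: "b > 0" unfolding b_def by (rule quad_form_pos_diag[OF Suc.prems(3)]) auto
  have "(\<Sum>i<Suc n. \<Sum>j<Suc n. G i j * B i j) =
      quad_form (Suc n) G (\<lambda>i. B i n) / b + (\<Sum>i<Suc n. \<Sum>j<Suc n. G i j * B' i j)"
  proof -
    have "G i j * B i j = B i n * G i j * B j n / b + G i j * B' i j" for i j
      using b unfolding B'_def by (simp add: field_simps)
    then show ?thesis
      unfolding quad_form_def by (simp only: sum.distrib sum_divide_distrib)
  qed
  also have "(\<Sum>i<Suc n. \<Sum>j<Suc n. G i j * B' i j) = (\<Sum>i<n. \<Sum>j<n. G i j * B' i j)"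
  proof -
    have "B' i n = 0" "B' n i = 0" if "i < Suc n" for i
      using b Suc.prems(2)[OF that, of n] unfolding B'_def b_def by simp_all
    then show ?thesis by simp
  qed
  also have "(\<Sum>i<n. \<Sum>j<n. G i j * B' i j) \<ge> 0"
  proof (rule Suc.IH)
    show "quad_form n G v \<ge> 0" for v
      using Suc.prems(1)[of "v(n := 0)"] unfolding quad_form_restrict .
    show "B' i j = B' j i" if "i < n" "j < n" for i j
      using that Suc.prems(2) unfolding B'_def by simp
    show "quad_form n B' v > 0" if "\<exists>i<n. v i \<noteq> 0" for v
      using schur_complement_pos[OF Suc.prems(2,3) that] unfolding B'_def b_def by simp
  qed
  moreover have "quad_form (Suc n) G (\<lambda>i. B i n) / b \<ge> 0"
    using Suc.prems(1) b by simp
  ultimately show ?case by simp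
qed

lemma entry_inner_pos_def_nonneg:
  assumes A: "pos_def_mat r A" and B: "sym_mat s B" "pos_def_mat s B" and X: "X \<in> carrier_mat r s"
  shows "entry_inner r s X (A * X * B) \<ge> 0"
proof -
  have Ac: "A \<in> carrier_mat r r" by (rule pos_def_mat_carrier[OF A])
  have Bc: "B \<in> carrier_mat s s" and Bt: "transpose_mat B = B" using B unfolding sym_mat_def by auto
  define G where "G = transpose_mat X * (A * X)"
  have Gc: "G \<in> carrier_mat s s" unfolding G_def using X Ac by auto
  have "entry_inner r s X (A * X * B) = entry_inner r s (X * B) (A * X)"
    using entry_inner_mult_right[OF X _ Bc, of "A * X"] Ac X Bt by auto
  also have "\<dots> = entry_inner s s G B"
    unfolding G_def using entry_inner_mult_left[of B s s "transpose_mat X" r "A * X"] Ac X Bc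
    by (simp add: entry_inner_commute)
  also have "\<dots> \<ge> 0"
    unfolding entry_inner_def
  proof (rule sum_mult_psd_pd_nonneg)
    fix v :: "nat \<Rightarrow> real"
    have v: "vec s v \<in> carrier_vec s" by simp
    have "G *\<^sub>v vec s v = transpose_mat X *\<^sub>v ((A * X) *\<^sub>v vec s v)"
      unfolding G_def using X Ac v by (intro assoc_mult_mat_vec[of _ s r _ s]) auto
    also have "(A * X) *\<^sub>v vec s v = A *\<^sub>v (X *\<^sub>v vec s v)"
      by (rule assoc_mult_mat_vec[OF Ac X v])
    finally have "G *\<^sub>v vec s v = transpose_mat X *\<^sub>v (A *\<^sub>v (X *\<^sub>v vec s v))" .
    then have "quad_form s (\<lambda>i j. G $$ (i, j)) v = (X *\<^sub>v vec s v) \<bullet> (A *\<^sub>v (X *\<^sub>v vec s v))"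
      unfolding quad_form_eq_scalar_prod[OF Gc]
      using transpose_vec_mult_scalar[of "transpose_mat X" s r "A *\<^sub>v (X *\<^sub>v vec s v)" "vec s v"] X Ac
      by (simp add: comm_scalar_prod[of _ s])
    also have "\<dots> \<ge> 0" using pos_def_mat_quad_nonneg[OF A] X by simp
    finally show "quad_form s (\<lambda>i j. G $$ (i, j)) v \<ge> 0" .
  next
    show "B $$ (i, j) = B $$ (j, i)" if "i < s" "j < s" for i j
      using that Bt Bc by (metis index_transpose_mat(1) carrier_matD)
  next
    fix v :: "nat \<Rightarrow> real"
    assume "\<exists>i<s. v i \<noteq> 0"
    then have "vec s v \<noteq> 0\<^sub>v s" by (auto simp: vec_eq_iff)
    then show "quad_form s (\<lambda>i j. B $$ (i, j)) v > 0"
      using B(2) unfolding pos_def_mat_def quad_form_eq_scalar_prod[OF Bc] by auto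
  qed
  finally show ?thesis .
qed

section \<open>Cauchy-Schwarz for \<open>\<langle>Y, A Z B\<rangle>\<close>\<close>

definition sandwich_inner :: "nat \<Rightarrow> nat \<Rightarrow> real mat \<Rightarrow> real mat \<Rightarrow> real mat \<Rightarrow> real mat \<Rightarrow> real" where
  "sandwich_inner r s A B Y Z = entry_inner r s Y (A * Z * B)"

lemma sandwich_inner_commute:
  assumes "A \<in> carrier_mat r r" "transpose_mat A = A" "B \<in> carrier_mat s s" "transpose_mat B = B"
    and "Y \<in> carrier_mat r s" "Z \<in> carrier_mat r s"
  shows "sandwich_inner r s A B Y Z = sandwich_inner r s A B Z Y"
proof -
  have "sandwich_inner r s A B Y Z = entry_inner r s (Y * B) (A * Z)"
    unfolding sandwich_inner_def using entry_inner_mult_right[of Y r s "A * Z" s B] assms by auto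
  also have "\<dots> = entry_inner r s (A * (Y * B)) Z"
    using entry_inner_mult_left[of "Y * B" r s A r Z] assms by auto
  also have "A * (Y * B) = A * Y * B" using assms by (simp add: assoc_mult_mat)
  finally show ?thesis unfolding sandwich_inner_def by (simp add: entry_inner_commute)
qed

lemma sandwich_inner_add_smult_right:
  assumes "A \<in> carrier_mat r r" "B \<in> carrier_mat s s" "Z1 \<in> carrier_mat r s" "Z2 \<in> carrier_mat r s"
  shows "sandwich_inner r s A B Y (Z1 + t \<cdot>\<^sub>m Z2) = sandwich_inner r s A B Y Z1 + t * sandwich_inner r s A B Y Z2"
proof -
  have "A * (Z1 + t \<cdot>\<^sub>m Z2) * B = A * Z1 * B + t \<cdot>\<^sub>m (A * Z2 * B)"
    using assms by (simp add: mult_add_distrib_mat[of A r r] mult_smult_distrib[of A r r]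
        add_mult_distrib_mat[of _ r s] mult_smult_assoc_mat[of _ r s])
  then show ?thesis
    unfolding sandwich_inner_def using assms by (simp add: entry_inner_add_right entry_inner_smult_right)
qed

lemma nonneg_quadratic_discriminant:
  fixes a b c :: real
  assumes "\<And>t. a + 2 * b * t + c * t\<^sup>2 \<ge> 0" "c \<ge> 0"
  shows "b\<^sup>2 \<le> a * c"
proof (cases "c = 0")
  case True
  show ?thesis
  proof (cases "b = 0")
    case False
    have "a + 2 * b * (- (a + 1) / (2 * b)) + c * (- (a + 1) / (2 * b))\<^sup>2 \<ge> 0" by (rule assms)
    with True False show ?thesis by (simp add: field_simps)
  qed (use True in simp)
next
  case False
  with assms(2) have c: "c > 0" by simp
  have "a + 2 * b * (- b / c) + c * (- b / c)\<^sup>2 \<ge> 0" by (rule assms)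
  with c show ?thesis by (simp add: field_simps power2_eq_square)
qed

lemma sandwich_inner_Cauchy_Schwarz:
  assumes A: "A \<in> carrier_mat r r" "transpose_mat A = A"
    and B: "B \<in> carrier_mat s s" "transpose_mat B = B"
    and psd: "\<And>W. W \<in> carrier_mat r s \<Longrightarrow> sandwich_inner r s A B W W \<ge> 0"
    and X: "X \<in> carrier_mat r s" and Z: "Z \<in> carrier_mat r s"
  shows "(sandwich_inner r s A B X Z)\<^sup>2 \<le> sandwich_inner r s A B X X * sandwich_inner r s A B Z Z"
proof (rule nonneg_quadratic_discriminant)
  fix t :: real
  let ?f = "sandwich_inner r s A B"
  have W: "X + t \<cdot>\<^sub>m Z \<in> carrier_mat r s" using X Z by auto
  note lin = sandwich_inner_add_smult_right[OF A(1) B(1) X Z]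
  note comm = sandwich_inner_commute[OF A B]
  have "?f (X + t \<cdot>\<^sub>m Z) (X + t \<cdot>\<^sub>m Z) = ?f X (X + t \<cdot>\<^sub>m Z) + t * ?f Z (X + t \<cdot>\<^sub>m Z)"
    using lin comm[OF W X] comm[OF W Z] by simp
  also have "\<dots> = ?f X X + 2 * ?f X Z * t + ?f Z Z * t\<^sup>2"
    using lin comm[OF Z X] by (simp add: algebra_simps power2_eq_square)
  finally show "?f X X + 2 * ?f X Z * t + ?f Z Z * t\<^sup>2 \<ge> 0"
    using psd[OF W] by simp
qed (use psd[OF Z] in simp)

lemma assoc_mult_mat_dims:
  "dim_col A = dim_row B \<Longrightarrow> dim_col B = dim_row C \<Longrightarrow> A * B * C = A * (B * (C :: 'a :: semiring_0 mat))"
  by (rule assoc_mult_mat[of A "dim_row A" "dim_col A" B "dim_col B" C "dim_col C"]) auto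

lemma pow_mat_add:
  assumes "(A :: 'a :: semiring_1 mat) \<in> carrier_mat n n"
  shows "A ^\<^sub>m (i + k) = A ^\<^sub>m i * A ^\<^sub>m k"
proof -
  interpret semiring "ring_mat TYPE('a) n ()" by (rule semiring_mat)
  show ?thesis using assms nat_pow_mult[of A i k]
    by (simp add: pow_mat_ring_pow[OF assms, of _ "()"] ring_mat_def)
qed

lemma pow_mat_Suc_left:
  assumes "(A :: 'a :: semiring_1 mat) \<in> carrier_mat n n"
  shows "A ^\<^sub>m Suc k = A * A ^\<^sub>m k"
  using pow_mat_add[OF assms, of 1 k] assms by simp

definition sandwich_pow :: "real mat \<Rightarrow> real mat \<Rightarrow> nat \<Rightarrow> real mat \<Rightarrow> real mat" where
  "sandwich_pow M N m Y = M ^\<^sub>m m * Y * N ^\<^sub>m m"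

context
  fixes M N :: "real mat" and r s :: nat
  assumes M: "M \<in> carrier_mat r r" and N: "N \<in> carrier_mat s s"
begin

lemma sandwich_pow_carrier: "Y \<in> carrier_mat r s \<Longrightarrow> sandwich_pow M N m Y \<in> carrier_mat r s"
  unfolding sandwich_pow_def using M N by auto

lemma sandwich_pow_0: "Y \<in> carrier_mat r s \<Longrightarrow> sandwich_pow M N 0 Y = Y"
  unfolding sandwich_pow_def using M N by auto

lemma sandwich_pow_Suc:
  assumes "Y \<in> carrier_mat r s"
  shows "sandwich_pow M N (Suc m) Y = sandwich_pow M N m (M * Y * N)"
    and "sandwich_pow M N (Suc m) Y = M * sandwich_pow M N m Y * N"
proof -
  show "sandwich_pow M N (Suc m) Y = sandwich_pow M N m (M * Y * N)"
    using assms M N unfolding sandwich_pow_def pow_mat_Suc_left[OF N]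
    by (simp add: assoc_mult_mat_dims)
  show "sandwich_pow M N (Suc m) Y = M * sandwich_pow M N m Y * N"
    using assms M N unfolding sandwich_pow_def pow_mat_Suc_left[OF M] pow_mat.simps(2)[of N]
    by (simp add: assoc_mult_mat_dims)
qed

lemma sandwich_pow_add:
  assumes "Y \<in> carrier_mat r s"
  shows "sandwich_pow M N m (sandwich_pow M N k Y) = sandwich_pow M N (m + k) Y"
proof -
  have "N ^\<^sub>m (m + k) = N ^\<^sub>m k * N ^\<^sub>m m" using pow_mat_add[OF N, of k m] by (simp add: add.commute)
  then show ?thesis
    using assms M N unfolding sandwich_pow_def by (simp add: pow_mat_add[OF M] assoc_mult_mat_dims)
qed

end

lemma entry_inner_antisym_sandwich_commute:
  assumes S: "antisym_mat r S" and T: "antisym_mat s T"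
    and Y: "Y \<in> carrier_mat r s" and Z: "Z \<in> carrier_mat r s"
  shows "entry_inner r s Z (S * Y * T) = entry_inner r s Y (S * Z * T)"
proof -
  have Sc: "S \<in> carrier_mat r r" and St: "transpose_mat S = - S" using S unfolding antisym_mat_def by auto
  have Tc: "T \<in> carrier_mat s s" and Tt: "transpose_mat T = - T" using T unfolding antisym_mat_def by auto
  have "entry_inner r s Z (S * Y * T) = entry_inner r s (transpose_mat S * (Z * transpose_mat T)) Y"
    using entry_inner_mult_right[OF Z _ Tc, of "S * Y"] entry_inner_mult_left[OF _ Sc Y, of "Z * transpose_mat T"]
      Sc Y Z Tc by auto
  also have "transpose_mat S * (Z * transpose_mat T) = S * Z * T"
    using St Tt Sc Z Tc by (simp add: assoc_mult_mat_dims)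
  finally show ?thesis by (simp add: entry_inner_commute)
qed

context
  fixes r s :: nat and A B S T M N :: "real mat"
  assumes A: "A \<in> carrier_mat r r" "transpose_mat A = A"
    and B: "B \<in> carrier_mat s s" "transpose_mat B = B"
    and S: "antisym_mat r S" and T: "antisym_mat s T"
    and M: "M \<in> carrier_mat r r" and N: "N \<in> carrier_mat s s"
    and AM: "A * M = S" and NB: "N * B = T"
begin

lemma sandwich_inner_twist:
  assumes Z: "Z \<in> carrier_mat r s"
  shows "sandwich_inner r s A B Y (M * Z * N) = entry_inner r s Y (S * Z * T)"
proof -
  have "A * (M * Z * N) * B = S * Z * T"
    unfolding AM[symmetric] NB[symmetric] using A B M N Z by (simp add: assoc_mult_mat_dims)
  then show ?thesis unfolding sandwich_inner_def by simp
qed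

lemma sandwich_inner_twist_adjoint:
  assumes Y: "Y \<in> carrier_mat r s" and Z: "Z \<in> carrier_mat r s"
  shows "sandwich_inner r s A B (M * Y * N) Z = sandwich_inner r s A B Y (M * Z * N)"
proof -
  have "sandwich_inner r s A B (M * Y * N) Z = sandwich_inner r s A B Z (M * Y * N)"
    using sandwich_inner_commute[OF A B _ Z, of "M * Y * N"] M Y N by auto
  also have "\<dots> = sandwich_inner r s A B Y (M * Z * N)"
    unfolding sandwich_inner_twist[OF Y] sandwich_inner_twist[OF Z]
    by (rule entry_inner_antisym_sandwich_commute[OF S T Y Z])
  finally show ?thesis .
qed

lemma sandwich_inner_pow_adjoint:
  "Y \<in> carrier_mat r s \<Longrightarrow> Z \<in> carrier_mat r s \<Longrightarrow>
    sandwich_inner r s A B (sandwich_pow M N m Y) Z = sandwich_inner r s A B Y (sandwich_pow M N m Z)"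
proof (induction m arbitrary: Y Z)
  case 0
  then show ?case using M N by (simp add: sandwich_pow_0)
next
  case (Suc m)
  have MYN: "M * Y * N \<in> carrier_mat r s" using Suc.prems M N by auto
  have "sandwich_inner r s A B (sandwich_pow M N (Suc m) Y) Z =
      sandwich_inner r s A B (M * Y * N) (sandwich_pow M N m Z)"
    using Suc.IH[OF MYN Suc.prems(2)] sandwich_pow_Suc(1)[OF M N Suc.prems(1)] by simp
  also have "\<dots> = sandwich_inner r s A B Y (sandwich_pow M N (Suc m) Z)"
    using sandwich_inner_twist_adjoint[OF Suc.prems(1) sandwich_pow_carrier[OF M N Suc.prems(2)]]
      sandwich_pow_Suc(2)[OF M N Suc.prems(2)] by simp
  finally show ?case .
qed

lemma sandwich_inner_pow_Cauchy_Schwarz: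
  assumes psd: "\<And>W. W \<in> carrier_mat r s \<Longrightarrow> sandwich_inner r s A B W W \<ge> 0"
    and X: "X \<in> carrier_mat r s"
  shows "(sandwich_inner r s A B X (sandwich_pow M N m X))\<^sup>2 \<le>
    sandwich_inner r s A B X X * sandwich_inner r s A B X (sandwich_pow M N (2 * m) X)"
proof -
  have pow_X: "sandwich_pow M N m X \<in> carrier_mat r s" by (rule sandwich_pow_carrier[OF M N X])
  have "sandwich_inner r s A B X (sandwich_pow M N (2 * m) X) =
      sandwich_inner r s A B (sandwich_pow M N m X) (sandwich_pow M N m X)"
    unfolding sandwich_inner_pow_adjoint[OF X pow_X] sandwich_pow_add[OF M N X] by (simp add: mult_2)
  then show ?thesis using sandwich_inner_Cauchy_Schwarz[OF A B psd X pow_X] by simp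
qed

end

section \<open>Growth of matrix powers and a discrete Gelfand formula\<close>

lemma smult_mat_mult_mat_vec:
  assumes "A \<in> carrier_mat n n'" "v \<in> carrier_vec n'"
  shows "(a \<cdot>\<^sub>m A) *\<^sub>v v = a \<cdot>\<^sub>v (A *\<^sub>v (v :: 'a :: comm_ring_1 vec))"
  using assms by (intro eq_vecI) (auto simp: scalar_prod_def sum_distrib_left ac_simps)

lemma spectrum_smult_mat:
  fixes A :: "'a :: field mat"
  assumes A: "A \<in> carrier_mat n n" and a: "a \<noteq> 0" and k: "k \<in> spectrum (a \<cdot>\<^sub>m A)"
  shows "k / a \<in> spectrum A"
proof -
  from k obtain v where v: "eigenvector (a \<cdot>\<^sub>m A) v k" unfolding spectrum_def eigenvalue_def by auto
  then have vc: "v \<in> carrier_vec n" and "v \<noteq> 0\<^sub>v n" and "a \<cdot>\<^sub>v (A *\<^sub>v v) = k \<cdot>\<^sub>v v"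
    using A smult_mat_mult_mat_vec[OF A] unfolding eigenvector_def by auto
  moreover from this have "A *\<^sub>v v = (k / a) \<cdot>\<^sub>v v"
    using a A by (metis (no_types, lifting) divide_inverse_commute inverse_eq_divide left_inverse
        one_smult_vec smult_smult_assoc)
  ultimately have "eigenvector A v (k / a)" using A unfolding eigenvector_def by auto
  then show ?thesis unfolding spectrum_def eigenvalue_def by auto
qed

lemma pow_smult_mat:
  assumes "(A :: 'a :: comm_ring_1 mat) \<in> carrier_mat n n"
  shows "(a \<cdot>\<^sub>m A) ^\<^sub>m k = a ^ k \<cdot>\<^sub>m A ^\<^sub>m k"
proof (induction k)
  case 0
  then show ?case using assms by (auto intro!: eq_matI)
next
  case (Suc k)
  then show ?case
    using assms by (auto simp: mult_smult_assoc_mat[of _ n n _ n] mult_smult_distrib[of _ n n _ n]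
        intro!: eq_matI)
qed

lemma real_spectral_radius_nonneg:
  assumes "M \<in> carrier_mat n n" "n > 0"
  shows "real_spectral_radius M \<ge> 0"
  using spectral_radius_mem_max(1)[of "map_mat complex_of_real M" n] assms
  unfolding real_spectral_radius_def by auto

lemma pow_mat_norm_bound_spectral_radius:
  assumes M: "M \<in> carrier_mat n n" and n: "n > 0" and c: "c > real_spectral_radius M"
  shows "\<exists>K. \<forall>m. norm_bound (M ^\<^sub>m m) (K * c ^ m)"
proof -
  define Mc where "Mc = map_mat complex_of_real M"
  have Mc: "Mc \<in> carrier_mat n n" using M unfolding Mc_def by auto
  have c0: "c > 0" using c real_spectral_radius_nonneg[OF M n] by simp
  define D where "D = complex_of_real (1 / c) \<cdot>\<^sub>m Mc"
  have D: "D \<in> carrier_mat n n" using Mc unfolding D_def by auto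
  have "spectral_radius D < 1"
  proof -
    from spectral_radius_mem_max(1)[OF D n] obtain k where k: "k \<in> spectrum D"
      and eq: "spectral_radius D = norm k" by auto
    have "k / complex_of_real (1 / c) \<in> spectrum Mc"
      using spectrum_smult_mat[OF Mc _ k[unfolded D_def]] c0 by simp
    then have "norm (k / complex_of_real (1 / c)) \<le> spectral_radius Mc"
      using spectral_radius_mem_max(2)[OF Mc n] by auto
    moreover have "spectral_radius Mc < c" using c unfolding real_spectral_radius_def Mc_def .
    moreover have "norm (k / complex_of_real (1 / c)) = norm k * c" using c0 by (simp add: norm_mult)
    ultimately have "norm k * c < c" by linarith
    then show ?thesis using eq c0 by (simp add: mult_less_cancel_right2)
  qed
  from spectral_radius_jnf_norm_bound_less_1_upper_triangular[OF D this]
  obtain K where K: "\<And>k. norm_bound (D ^\<^sub>m k) K" by auto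
  have "norm_bound (M ^\<^sub>m m) (K * c ^ m)" for m
  proof
    fix i j assume ij: "i < dim_row (M ^\<^sub>m m)" "j < dim_col (M ^\<^sub>m m)"
    have "D ^\<^sub>m m = complex_of_real (1 / c) ^ m \<cdot>\<^sub>m Mc ^\<^sub>m m"
      unfolding D_def by (rule pow_smult_mat[OF Mc])
    also have "Mc ^\<^sub>m m = map_mat complex_of_real (M ^\<^sub>m m)"
      unfolding Mc_def by (rule of_real_hom.mat_hom_pow[OF M, symmetric])
    finally have "norm ((D ^\<^sub>m m) $$ (i, j)) = \<bar>(M ^\<^sub>m m) $$ (i, j)\<bar> / c ^ m"
      using ij M c0 by (simp add: norm_mult norm_power norm_divide power_one_over)
    moreover have "norm ((D ^\<^sub>m m) $$ (i, j)) \<le> K"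
      using K[of m] ij M D unfolding norm_bound_def by (metis carrier_matD pow_mat_dim_square)
    ultimately show "norm ((M ^\<^sub>m m) $$ (i, j)) \<le> K * c ^ m"
      using c0 by (simp add: divide_le_eq)
  qed
  then show ?thesis by blast
qed

lemma sandwich_inner_sandwich_pow_bound:
  assumes A: "A \<in> carrier_mat r r" and B: "B \<in> carrier_mat s s"
    and M: "M \<in> carrier_mat r r" and N: "N \<in> carrier_mat s s" and X: "X \<in> carrier_mat r s"
    and KM: "\<And>m. norm_bound (M ^\<^sub>m m) (K1 * c1 ^ m)"
    and KN: "\<And>m. norm_bound (N ^\<^sub>m m) (K2 * c2 ^ m)"
  shows "\<exists>K. \<forall>m. \<bar>sandwich_inner r s A B X (sandwich_pow M N m X)\<bar> \<le> K * (c1 * c2) ^ m"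
proof -
  obtain bx ba bb where bx: "norm_bound X bx" and ba: "norm_bound A ba" and bb: "norm_bound B bb"
    using norm_bound_max by blast
  define K where "K = real r * real s * bx * (ba * (K1 * bx * real r * K2 * real s) * real r * bb * real s)"
  have "\<bar>sandwich_inner r s A B X (sandwich_pow M N m X)\<bar> \<le> K * (c1 * c2) ^ m" for m
  proof -
    have Mm: "M ^\<^sub>m m \<in> carrier_mat r r" and Nm: "N ^\<^sub>m m \<in> carrier_mat s s" using M N by simp_all
    have "norm_bound (M ^\<^sub>m m * X) (K1 * c1 ^ m * bx * real r)"
      by (rule norm_bound_mult[OF Mm X KM bx])
    then have "norm_bound (M ^\<^sub>m m * X * N ^\<^sub>m m) (K1 * c1 ^ m * bx * real r * (K2 * c2 ^ m) * real s)"
      using Mm X by (intro norm_bound_mult[OF _ Nm _ KN]) auto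
    moreover have P: "M ^\<^sub>m m * X * N ^\<^sub>m m \<in> carrier_mat r s" using Mm X Nm by simp
    ultimately have "norm_bound (A * (M ^\<^sub>m m * X * N ^\<^sub>m m))
        (ba * (K1 * c1 ^ m * bx * real r * (K2 * c2 ^ m) * real s) * real r)"
      by (intro norm_bound_mult[OF A P ba])
    then have "norm_bound (A * (M ^\<^sub>m m * X * N ^\<^sub>m m) * B)
        (ba * (K1 * c1 ^ m * bx * real r * (K2 * c2 ^ m) * real s) * real r * bb * real s)"
      by (intro norm_bound_mult[OF mult_carrier_mat[OF A P] B _ bb])
    then have "\<bar>sandwich_inner r s A B X (sandwich_pow M N m X)\<bar> \<le>
        real r * real s * bx * (ba * (K1 * c1 ^ m * bx * real r * (K2 * c2 ^ m) * real s) * real r * bb * real s)"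
      unfolding sandwich_inner_def sandwich_pow_def
      using Mm X Nm A B by (intro entry_inner_abs_le[OF X _ bx]) auto
    also have "\<dots> = K * (c1 * c2) ^ m" unfolding K_def by (simp add: power_mult_distrib ac_simps)
    finally show ?thesis .
  qed
  then show ?thesis by blast
qed

lemma Cauchy_Schwarz_iterate:
  fixes h :: "nat \<Rightarrow> real"
  assumes CS: "\<And>m. (h m)\<^sup>2 \<le> h 0 * h (2 * m)"
  shows "h 1 ^ 2 ^ Suc k \<le> h 0 ^ (2 ^ Suc k - 1) * h (2 ^ Suc k)"
proof (induction k)
  case 0
  then show ?case using CS[of 1] by simp
next
  case (Suc k)
  define n :: nat where "n = 2 ^ Suc k"
  have n: "n \<ge> 1" "2 ^ Suc (Suc k) = 2 * n" unfolding n_def by simp_all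
  have "h 1 ^ (2 * n) = (h 1 ^ n)\<^sup>2" by (simp add: power_mult mult.commute)
  also have "\<dots> \<le> (h 0 ^ (n - 1) * h n)\<^sup>2"
    using Suc.IH unfolding n_def by (intro power_mono) (simp_all add: zero_le_even_power)
  also have "\<dots> = (h 0 ^ (n - 1))\<^sup>2 * (h n)\<^sup>2" by (simp add: power_mult_distrib)
  also have "\<dots> \<le> (h 0 ^ (n - 1))\<^sup>2 * (h 0 * h (2 * n))" by (intro mult_left_mono CS) simp
  also have "\<dots> = h 0 ^ (2 * n - 1) * h (2 * n)"
  proof -
    have "2 * n - 1 = (n - 1) * 2 + 1" using n by simp
    then show ?thesis by (simp add: power_add power_mult)
  qed
  finally show ?case unfolding n .
qed

text \<open>Iterating Cauchy-Schwarz gives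
  \<open>\<bar>h 1\<bar> ^ 2 ^ k \<le> h 0 ^ (2 ^ k - 1) * K * c ^ 2 ^ k\<close>, so \<open>\<bar>h 1\<bar> / (c * h 0)\<close>
  has bounded powers.\<close>

lemma abs_le_of_Cauchy_Schwarz_growth:
  fixes h :: "nat \<Rightarrow> real"
  assumes CS: "\<And>m. (h m)\<^sup>2 \<le> h 0 * h (2 * m)" and h0: "h 0 \<ge> 0"
    and bd: "\<And>m. \<bar>h m\<bar> \<le> K * c ^ m" and c: "c > 0"
  shows "\<bar>h 1\<bar> \<le> c * h 0"
proof (cases "h 0 = 0")
  case True
  then show ?thesis using CS[of 1] by simp
next
  case False
  with h0 have h0: "h 0 > 0" by simp
  show ?thesis
  proof (rule ccontr)
    assume neg: "\<not> \<bar>h 1\<bar> \<le> c * h 0"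
    define d where "d = \<bar>h 1\<bar> / (c * h 0)"
    have d: "d > 1" and h1: "\<bar>h 1\<bar> = d * c * h 0"
      unfolding d_def using neg h0 c by (simp_all add: field_simps)
    obtain n where n: "K / h 0 < d ^ n" using real_arch_pow[OF d] by blast
    define N :: nat where "N = 2 ^ Suc n"
    have n_le_N: "n \<le> N"
      unfolding N_def using less_exp[of n] power_increasing[of n "Suc n" "2::nat"] by linarith
    have N_even: "even N" and N_Suc: "N = Suc (N - 1)" unfolding N_def by simp_all
    have "h 0 ^ N = h 0 * h 0 ^ (N - 1)" using N_Suc by (metis power_Suc)
    then have "(d ^ N * h 0) * (c ^ N * h 0 ^ (N - 1)) = \<bar>h 1\<bar> ^ N"
      unfolding h1 by (simp add: power_mult_distrib ac_simps)
    also have "\<dots> = h 1 ^ N" by (rule power_even_abs[OF N_even])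
    also have "\<dots> \<le> h 0 ^ (N - 1) * h N"
      using Cauchy_Schwarz_iterate[OF CS, of n] unfolding N_def .
    also have "\<dots> \<le> h 0 ^ (N - 1) * (K * c ^ N)"
      using bd[of N] h0 by (intro mult_left_mono) auto
    finally have "d ^ N * h 0 \<le> K"
      using h0 c by (simp add: ac_simps)
    moreover have "h 0 * d ^ n \<le> h 0 * d ^ N" using d n_le_N h0 by (simp add: power_increasing)
    moreover have "K < h 0 * d ^ n" using n h0 by (simp add: pos_divide_less_eq mult.commute)
    ultimately show False by (simp add: mult.commute)
  qed
qed

lemma le_of_le_perturbed_product:
  fixes x y p q :: real
  assumes "\<And>d. d > 0 \<Longrightarrow> x \<le> (p + d) * (q + d) * y"
  shows "x \<le> p * q * y"
proof (rule tendsto_lowerbound)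
  have "((\<lambda>d. (p + d) * (q + d) * y) \<longlongrightarrow> (p + 0) * (q + 0) * y) (at_right 0)"
    by (intro tendsto_intros)
  then show "((\<lambda>d. (p + d) * (q + d) * y) \<longlongrightarrow> p * q * y) (at_right 0)" by simp
  show "\<forall>\<^sub>F d in at_right 0. x \<le> (p + d) * (q + d) * y"
    using eventually_at_right_less[of 0] by eventually_elim (rule assms)
qed simp

section \<open>Sufficiency\<close>

lemma pos_def_mat_inv_mat_cancel:
  assumes "pos_def_mat n A" "S \<in> carrier_mat n n"
  shows "A * (inv_mat A * S) = S" "S * inv_mat A * A = S"
  using pos_def_mat_inv[OF assms(1)] pos_def_mat_carrier[OF assms(1)] assms(2)
  by (simp_all add: assoc_mult_mat[of A n n _ n S n, symmetric] assoc_mult_mat[of S n n _ n A n])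

lemma frob_inner_Phi_op:
  assumes "A \<in> carrier_mat r r" "B \<in> carrier_mat s s" "S \<in> carrier_mat r r" "T \<in> carrier_mat s s"
    and "X \<in> carrier_mat r s"
  shows "frob_inner X (Phi_op A B S T X) = entry_inner r s X (A * X * B) + entry_inner r s X (S * X * T)"
  unfolding Phi_op_def using assms
  by (simp add: frob_inner_eq_entry_inner[of X r s] entry_inner_add_right)

lemma abs_entry_inner_antisym_le:
  assumes r: "r > 0" and s: "s > 0"
    and A: "sym_mat r A" "pos_def_mat r A" and B: "sym_mat s B" "pos_def_mat s B"
    and S: "antisym_mat r S" and T: "antisym_mat s T"
    and M: "M \<in> carrier_mat r r" and N: "N \<in> carrier_mat s s"
    and AM: "A * M = S" and NB: "N * B = T"
    and X: "X \<in> carrier_mat r s"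
  shows "\<bar>entry_inner r s X (S * X * T)\<bar> \<le>
    real_spectral_radius M * real_spectral_radius N * entry_inner r s X (A * X * B)"
proof -
  have Ac: "A \<in> carrier_mat r r" "transpose_mat A = A" using A unfolding sym_mat_def by auto
  have Bc: "B \<in> carrier_mat s s" "transpose_mat B = B" using B unfolding sym_mat_def by auto
  have psd: "sandwich_inner r s A B W W \<ge> 0" if "W \<in> carrier_mat r s" for W
    unfolding sandwich_inner_def by (rule entry_inner_pos_def_nonneg[OF A(2) B that])
  define h where "h m = sandwich_inner r s A B X (sandwich_pow M N m X)" for m
  have h0: "h 0 = entry_inner r s X (A * X * B)"
    unfolding h_def sandwich_inner_def using sandwich_pow_0[OF M N X] by simp
  have h1: "h 1 = entry_inner r s X (S * X * T)"
    unfolding h_def using sandwich_pow_Suc(2)[OF M N X, of 0] sandwich_pow_0[OF M N X]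
      sandwich_inner_twist[OF Ac Bc S T M N AM NB X] by simp
  have CS: "(h m)\<^sup>2 \<le> h 0 * h (2 * m)" for m
    unfolding h_def sandwich_pow_0[OF M N X]
    by (rule sandwich_inner_pow_Cauchy_Schwarz[OF Ac Bc S T M N AM NB psd X])
  have "\<bar>h 1\<bar> \<le> (real_spectral_radius M + d) * (real_spectral_radius N + d) * h 0" if "d > 0" for d
  proof -
    obtain K1 K2 where
      "\<And>m. norm_bound (M ^\<^sub>m m) (K1 * (real_spectral_radius M + d) ^ m)"
      "\<And>m. norm_bound (N ^\<^sub>m m) (K2 * (real_spectral_radius N + d) ^ m)"
      using pow_mat_norm_bound_spectral_radius[OF M r] pow_mat_norm_bound_spectral_radius[OF N s] \<open>d > 0\<close>
      by (metis less_add_same_cancel1)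
    from sandwich_inner_sandwich_pow_bound[OF Ac(1) Bc(1) M N X this]
    obtain K where "\<And>m. \<bar>h m\<bar> \<le> K * ((real_spectral_radius M + d) * (real_spectral_radius N + d)) ^ m"
      unfolding h_def by blast
    moreover have "(real_spectral_radius M + d) * (real_spectral_radius N + d) > 0"
      using real_spectral_radius_nonneg[OF M r] real_spectral_radius_nonneg[OF N s] \<open>d > 0\<close> by simp
    ultimately show ?thesis
      using abs_le_of_Cauchy_Schwarz_growth[OF CS] h0 psd[OF X] unfolding sandwich_inner_def by auto
  qed
  then show ?thesis unfolding h0[symmetric] h1[symmetric] by (rule le_of_le_perturbed_product)
qed

lemma psd_op_if_spectral_radius_le:
  assumes r: "r > 0" and s: "s > 0"
    and A: "sym_mat r A" "pos_def_mat r A" and B: "sym_mat s B" "pos_def_mat s B"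
    and S: "antisym_mat r S" and T: "antisym_mat s T"
    and le: "real_spectral_radius (inv_mat A * S) * real_spectral_radius (T * inv_mat B) \<le> 1"
  shows "psd_op r s (Phi_op A B S T)"
  unfolding psd_op_def
proof
  fix X :: "real mat" assume X: "X \<in> carrier_mat r s"
  have Ac: "A \<in> carrier_mat r r" and Bc: "B \<in> carrier_mat s s" using A B unfolding sym_mat_def by auto
  have Sc: "S \<in> carrier_mat r r" and Tc: "T \<in> carrier_mat s s" using S T unfolding antisym_mat_def by auto
  have M: "inv_mat A * S \<in> carrier_mat r r" and N: "T * inv_mat B \<in> carrier_mat s s"
    using pos_def_mat_inv(1)[OF A(2)] pos_def_mat_inv(1)[OF B(2)] Sc Tc by auto
  have "\<bar>entry_inner r s X (S * X * T)\<bar> \<le> 1 * entry_inner r s X (A * X * B)"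
    using abs_entry_inner_antisym_le[OF r s A B S T M N pos_def_mat_inv_mat_cancel(1)[OF A(2) Sc]
        pos_def_mat_inv_mat_cancel(2)[OF B(2) Tc] X]
      le entry_inner_pos_def_nonneg[OF A(2) B X]
    by (meson mult_right_mono order.trans)
  then show "frob_inner X (Phi_op A B S T X) \<ge> 0"
    unfolding frob_inner_Phi_op[OF Ac Bc Sc Tc X] by linarith
qed

section \<open>Necessity\<close>

lemma sym_mat_quad_commute:
  assumes "sym_mat n P" "p \<in> carrier_vec n" "q \<in> carrier_vec n"
  shows "q \<bullet> (P *\<^sub>v p) = p \<bullet> (P *\<^sub>v q)"
proof -
  have P: "P \<in> carrier_mat n n" "transpose_mat P = P" using assms(1) unfolding sym_mat_def by auto
  have "(transpose_mat P *\<^sub>v q) \<bullet> p = q \<bullet> (P *\<^sub>v p)" by (rule transpose_vec_mult_scalar[OF P(1) assms(2,3)])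
  then show ?thesis using P assms by (simp add: comm_scalar_prod[of _ n])
qed

lemma antisym_mat_quad_zero:
  assumes "antisym_mat n S" "v \<in> carrier_vec n"
  shows "v \<bullet> (S *\<^sub>v v) = 0"
proof -
  have S: "S \<in> carrier_mat n n" "transpose_mat S = - S" using assms(1) unfolding antisym_mat_def by auto
  have "(transpose_mat S *\<^sub>v v) \<bullet> v = v \<bullet> (S *\<^sub>v v)" by (rule transpose_vec_mult_scalar[OF S(1) assms(2,2)])
  then have "- ((S *\<^sub>v v) \<bullet> v) = v \<bullet> (S *\<^sub>v v)" using S assms(2) by simp
  then show ?thesis using S assms(2) by (simp add: comm_scalar_prod[of _ n])
qed

lemma real_eigen_pair:
  assumes M: "M \<in> carrier_mat n n" and n: "n > 0"
  obtains p q lam where "p \<in> carrier_vec n" "q \<in> carrier_vec n" "p \<noteq> 0\<^sub>v n \<or> q \<noteq> 0\<^sub>v n"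
    "M *\<^sub>v p = Re lam \<cdot>\<^sub>v p + (- Im lam) \<cdot>\<^sub>v q" "M *\<^sub>v q = Im lam \<cdot>\<^sub>v p + Re lam \<cdot>\<^sub>v q"
    "cmod lam = real_spectral_radius M"
proof -
  define Mc where "Mc = map_mat complex_of_real M"
  have Mc: "Mc \<in> carrier_mat n n" using M unfolding Mc_def by auto
  from spectral_radius_mem_max(1)[OF Mc n] obtain lam where "lam \<in> spectrum Mc"
    and lam: "cmod lam = real_spectral_radius M"
    unfolding real_spectral_radius_def Mc_def by auto
  then obtain u where "eigenvector Mc u lam" unfolding spectrum_def eigenvalue_def by auto
  then have u: "u \<in> carrier_vec n" "u \<noteq> 0\<^sub>v n" "Mc *\<^sub>v u = lam \<cdot>\<^sub>v u"
    using Mc unfolding eigenvector_def by auto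
  define p where "p = vec n (\<lambda>i. Re (u $ i))"
  define q where "q = vec n (\<lambda>i. Im (u $ i))"
  have pq: "p \<in> carrier_vec n" "q \<in> carrier_vec n" unfolding p_def q_def by auto
  have Mu: "(\<Sum>j<n. complex_of_real (M $$ (i, j)) * u $ j) = lam * u $ i" if "i < n" for i
  proof -
    have "(Mc *\<^sub>v u) $ i = (lam \<cdot>\<^sub>v u) $ i" using u(3) by simp
    then show ?thesis using that M u(1) unfolding Mc_def by (simp add: scalar_prod_def atLeast0LessThan)
  qed
  have "M *\<^sub>v p = Re lam \<cdot>\<^sub>v p + (- Im lam) \<cdot>\<^sub>v q" "M *\<^sub>v q = Im lam \<cdot>\<^sub>v p + Re lam \<cdot>\<^sub>v q"
    using M pq arg_cong[where f = Re, OF Mu] arg_cong[where f = Im, OF Mu] unfolding p_def q_def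
    by (auto simp: scalar_prod_def atLeast0LessThan Re_sum Im_sum intro!: eq_vecI)
  moreover have "p \<noteq> 0\<^sub>v n \<or> q \<noteq> 0\<^sub>v n"
  proof (rule ccontr)
    assume "\<not> ?thesis"
    then have "u $ i = 0" if "i < n" for i
      using that unfolding p_def q_def
      by (metis complex_eqI index_vec index_zero_vec(1) zero_complex.sel(1,2))
    then have "u = 0\<^sub>v n" using u(1) by (intro eq_vecI) auto
    then show False using u(2) by simp
  qed
  ultimately show ?thesis using that pq lam by blast
qed

lemma antisym_eigen_real_part_zero:
  assumes P: "sym_mat n P" "pos_def_mat n P" and R: "antisym_mat n R"
    and p: "p \<in> carrier_vec n" and q: "q \<in> carrier_vec n" and nz: "p \<noteq> 0\<^sub>v n \<or> q \<noteq> 0\<^sub>v n"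
    and Rp: "R *\<^sub>v p = a \<cdot>\<^sub>v (P *\<^sub>v p) + (- b) \<cdot>\<^sub>v (P *\<^sub>v q)"
    and Rq: "R *\<^sub>v q = b \<cdot>\<^sub>v (P *\<^sub>v p) + a \<cdot>\<^sub>v (P *\<^sub>v q)"
  shows "a = 0"
proof -
  have Pc: "P \<in> carrier_mat n n" using P(1) unfolding sym_mat_def by simp
  have "0 = p \<bullet> (R *\<^sub>v p) + q \<bullet> (R *\<^sub>v q)"
    using antisym_mat_quad_zero[OF R p] antisym_mat_quad_zero[OF R q] by simp
  also have "\<dots> = a * (p \<bullet> (P *\<^sub>v p) + q \<bullet> (P *\<^sub>v q))"
    unfolding Rp Rq using p q Pc sym_mat_quad_commute[OF P(1) p q]
    by (simp add: scalar_prod_add_distrib[of _ n] algebra_simps)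
  finally show ?thesis using pos_def_mat_quad_add_pos[OF P(2) p q nz] by simp
qed

lemma mult_mat_vec_lincomb:
  assumes "A \<in> carrier_mat n n" "x \<in> carrier_vec n" "y \<in> carrier_vec n"
  shows "A *\<^sub>v (a \<cdot>\<^sub>v x + b \<cdot>\<^sub>v y) = a \<cdot>\<^sub>v (A *\<^sub>v x) + b \<cdot>\<^sub>v (A *\<^sub>v (y :: 'a :: field vec))"
  using assms by (simp add: mult_add_distrib_mat_vec[OF assms(1)] mult_mat_vec[OF assms(1)])

lemma rotation_pair_abs:
  fixes P R :: "'a :: linordered_field mat"
  assumes P: "P \<in> carrier_mat n n" and R: "R \<in> carrier_mat n n"
    and pq: "p \<in> carrier_vec n" "q \<in> carrier_vec n" and nz: "p \<noteq> 0\<^sub>v n \<or> q \<noteq> 0\<^sub>v n"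
    and Rp: "R *\<^sub>v p = (- b) \<cdot>\<^sub>v (P *\<^sub>v q)" and Rq: "R *\<^sub>v q = b \<cdot>\<^sub>v (P *\<^sub>v p)"
  obtains q' where "q' \<in> carrier_vec n" "p \<noteq> 0\<^sub>v n \<or> q' \<noteq> 0\<^sub>v n"
    "R *\<^sub>v p = (- \<bar>b\<bar>) \<cdot>\<^sub>v (P *\<^sub>v q')" "R *\<^sub>v q' = \<bar>b\<bar> \<cdot>\<^sub>v (P *\<^sub>v p)"
proof (cases "b \<ge> 0")
  case True
  then show ?thesis using that[OF pq(2) nz] Rp Rq by simp
next
  case False
  have "(-1) \<cdot>\<^sub>v q \<in> carrier_vec n" using pq by simp
  moreover have "p \<noteq> 0\<^sub>v n \<or> (-1) \<cdot>\<^sub>v q \<noteq> 0\<^sub>v n"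
  proof -
    have "q = (-1) \<cdot>\<^sub>v ((-1) \<cdot>\<^sub>v q)" by (simp add: smult_smult_assoc)
    moreover have "(-1) \<cdot>\<^sub>v 0\<^sub>v n = (0\<^sub>v n :: 'a vec)" by (intro eq_vecI) auto
    ultimately show ?thesis using nz by metis
  qed
  moreover have "R *\<^sub>v p = (- \<bar>b\<bar>) \<cdot>\<^sub>v (P *\<^sub>v ((-1) \<cdot>\<^sub>v q))" "R *\<^sub>v ((-1) \<cdot>\<^sub>v q) = \<bar>b\<bar> \<cdot>\<^sub>v (P *\<^sub>v p)"
    using False Rp Rq pq by (simp_all add: mult_mat_vec[OF P] mult_mat_vec[OF R] smult_smult_assoc)
  ultimately show ?thesis using that by blast
qed

text \<open>The hypotheses say that \<open>Q\<close> maps eigenvectors of \<open>M\<close> to generalized eigenvectors of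
  the pencil \<open>(R, P)\<close>; such eigenvalues are purely imaginary since \<open>R\<close> is antisymmetric.\<close>

lemma antisym_rotation_pair:
  assumes n: "n > 0" and P: "sym_mat n P" "pos_def_mat n P" and R: "antisym_mat n R"
    and M: "M \<in> carrier_mat n n" and Q: "Q \<in> carrier_mat n n" "Q' \<in> carrier_mat n n" "Q' * Q = 1\<^sub>m n"
    and RQ: "R * Q = P * Q * M"
  obtains p q where "p \<in> carrier_vec n" "q \<in> carrier_vec n" "p \<noteq> 0\<^sub>v n \<or> q \<noteq> 0\<^sub>v n"
    "R *\<^sub>v p = (- real_spectral_radius M) \<cdot>\<^sub>v (P *\<^sub>v q)" "R *\<^sub>v q = real_spectral_radius M \<cdot>\<^sub>v (P *\<^sub>v p)"
proof -
  have Pc: "P \<in> carrier_mat n n" using P(1) unfolding sym_mat_def by simp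
  have Rc: "R \<in> carrier_mat n n" using R unfolding antisym_mat_def by simp
  obtain u v lam where uv: "u \<in> carrier_vec n" "v \<in> carrier_vec n" "u \<noteq> 0\<^sub>v n \<or> v \<noteq> 0\<^sub>v n"
    and Mu: "M *\<^sub>v u = Re lam \<cdot>\<^sub>v u + (- Im lam) \<cdot>\<^sub>v v"
    and Mv: "M *\<^sub>v v = Im lam \<cdot>\<^sub>v u + Re lam \<cdot>\<^sub>v v"
    and lam: "cmod lam = real_spectral_radius M"
    by (rule real_eigen_pair[OF M n])
  define p q where "p = Q *\<^sub>v u" and "q = Q *\<^sub>v v"
  have pq: "p \<in> carrier_vec n" "q \<in> carrier_vec n" unfolding p_def q_def using Q uv by auto
  have RQw: "R *\<^sub>v (Q *\<^sub>v w) = P *\<^sub>v (Q *\<^sub>v (M *\<^sub>v w))" if "w \<in> carrier_vec n" for w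
  proof -
    have "R *\<^sub>v (Q *\<^sub>v w) = (P * Q * M) *\<^sub>v w"
      unfolding RQ[symmetric] using Rc Q that by (simp add: assoc_mult_mat_vec)
    also have "\<dots> = P *\<^sub>v (Q *\<^sub>v (M *\<^sub>v w))"
      using Pc Q M that by (simp add: assoc_mult_mat_vec[of _ n n _ n])
    finally show ?thesis .
  qed
  have Rp: "R *\<^sub>v p = Re lam \<cdot>\<^sub>v (P *\<^sub>v p) + (- Im lam) \<cdot>\<^sub>v (P *\<^sub>v q)"
    and Rq: "R *\<^sub>v q = Im lam \<cdot>\<^sub>v (P *\<^sub>v p) + Re lam \<cdot>\<^sub>v (P *\<^sub>v q)"
    unfolding p_def q_def RQw[OF uv(1)] RQw[OF uv(2)] Mu Mv
      mult_mat_vec_lincomb[OF Q(1) uv(1,2)] mult_mat_vec_lincomb[OF Pc mult_mat_vec_carrier[OF Q(1)]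
        mult_mat_vec_carrier[OF Q(1)], OF uv(1,2)]
    by simp_all
  have nz: "p \<noteq> 0\<^sub>v n \<or> q \<noteq> 0\<^sub>v n"
  proof -
    have inj: "Q' *\<^sub>v (Q *\<^sub>v w) = w" if "w \<in> carrier_vec n" for w
      using that Q by (simp add: assoc_mult_mat_vec[of _ n n _ n, symmetric])
    have "Q' *\<^sub>v 0\<^sub>v n = 0\<^sub>v n" using Q(2) by (intro eq_vecI) auto
    then show ?thesis using inj[OF uv(1)] inj[OF uv(2)] uv(3) unfolding p_def q_def by metis
  qed
  have re: "Re lam = 0" by (rule antisym_eigen_real_part_zero[OF P R pq nz Rp Rq])
  have rho: "real_spectral_radius M = \<bar>Im lam\<bar>" using lam re by (simp add: cmod_def)
  have zero: "0 \<cdot>\<^sub>v x + y = y" "y + 0 \<cdot>\<^sub>v x = y" if "x \<in> carrier_vec n" "y \<in> carrier_vec n" for x y :: "real vec"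
    using that by (auto intro!: eq_vecI)
  have Pp: "P *\<^sub>v p \<in> carrier_vec n" "P *\<^sub>v q \<in> carrier_vec n" using Pc pq by auto
  have Rp': "R *\<^sub>v p = (- Im lam) \<cdot>\<^sub>v (P *\<^sub>v q)" and Rq': "R *\<^sub>v q = Im lam \<cdot>\<^sub>v (P *\<^sub>v p)"
    using Rp Rq re zero[OF Pp(1)] zero[OF Pp(2)] Pp by simp_all
  obtain q' where "q' \<in> carrier_vec n" "p \<noteq> 0\<^sub>v n \<or> q' \<noteq> 0\<^sub>v n"
    "R *\<^sub>v p = (- \<bar>Im lam\<bar>) \<cdot>\<^sub>v (P *\<^sub>v q')" "R *\<^sub>v q' = \<bar>Im lam\<bar> \<cdot>\<^sub>v (P *\<^sub>v p)"
    by (rule rotation_pair_abs[OF Pc Rc pq nz Rp' Rq'])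
  then show ?thesis using that pq(1) unfolding rho by blast
qed

definition outer_mat :: "nat \<Rightarrow> nat \<Rightarrow> real vec \<Rightarrow> real vec \<Rightarrow> real mat" where
  "outer_mat r s u w = mat r s (\<lambda>(i, j). u $ i * w $ j)"

lemma outer_mat_carrier [simp]: "outer_mat r s u w \<in> carrier_mat r s"
  unfolding outer_mat_def by auto

lemma entry_inner_outer_mat:
  assumes u: "u \<in> carrier_vec r" and w: "w \<in> carrier_vec s"
    and u': "u' \<in> carrier_vec r'" and w': "w' \<in> carrier_vec s'"
    and P: "P \<in> carrier_mat r r'" and R: "R \<in> carrier_mat s' s"
  shows "entry_inner r s (outer_mat r s u w) (P * outer_mat r' s' u' w' * R) =
    (u \<bullet> (P *\<^sub>v u')) * (w' \<bullet> (R *\<^sub>v w))"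
proof -
  define c where "c j = (\<Sum>k<s'. w' $ k * R $$ (k, j))" for j
  have row: "(P * outer_mat r' s' u' w') $$ (a, k) = (P *\<^sub>v u') $ a * w' $ k" if "a < r" "k < s'" for a k
    using that P u' w' unfolding outer_mat_def
    by (simp add: scalar_prod_def mult_mat_vec_def sum_distrib_left sum_distrib_right ac_simps)
  have entry: "(P * outer_mat r' s' u' w' * R) $$ (a, j) = (P *\<^sub>v u') $ a * c j"
    if a: "a < r" and j: "j < s" for a j
  proof -
    have "(P * outer_mat r' s' u' w' * R) $$ (a, j) = (\<Sum>k<s'. (P * outer_mat r' s' u' w') $$ (a, k) * R $$ (k, j))"
      using a j P R by (auto simp: scalar_prod_def atLeast0LessThan outer_mat_def intro!: sum.cong)
    then show ?thesis using row a unfolding c_def by (simp add: sum_distrib_left ac_simps)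
  qed
  have "entry_inner r s (outer_mat r s u w) (P * outer_mat r' s' u' w' * R) =
      (\<Sum>a<r. u $ a * (P *\<^sub>v u') $ a) * (\<Sum>j<s. w $ j * c j)"
    unfolding entry_inner_def sum_product using entry u w
    by (auto simp: outer_mat_def ac_simps intro!: sum.cong)
  also have "(\<Sum>a<r. u $ a * (P *\<^sub>v u') $ a) = u \<bullet> (P *\<^sub>v u')"
    using u P by (simp add: scalar_prod_def atLeast0LessThan)
  also have "(\<Sum>j<s. w $ j * c j) = w' \<bullet> (R *\<^sub>v w)"
    unfolding c_def using w' R w
    by (simp add: scalar_prod_def atLeast0LessThan sum_distrib_left sum_distrib_right ac_simps sum.swap[of _ "{..<s}"])
  finally show ?thesis .
qed

lemma entry_inner_sandwich_add:
  assumes "X1 \<in> carrier_mat r s" "X2 \<in> carrier_mat r s" "P \<in> carrier_mat r r" "R \<in> carrier_mat s s"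
  shows "entry_inner r s (X1 + X2) (P * (X1 + X2) * R) =
    entry_inner r s X1 (P * X1 * R) + entry_inner r s X1 (P * X2 * R) +
    entry_inner r s X2 (P * X1 * R) + entry_inner r s X2 (P * X2 * R)"
proof -
  have "P * (X1 + X2) * R = P * X1 * R + P * X2 * R"
    using assms by (simp add: mult_add_distrib_mat[of P r r] add_mult_distrib_mat[of _ r s])
  then show ?thesis using assms by (simp add: entry_inner_add_left entry_inner_add_right)
qed

definition Phi_quad :: "nat \<Rightarrow> nat \<Rightarrow> real mat \<Rightarrow> real mat \<Rightarrow> real mat \<Rightarrow> real mat \<Rightarrow> real mat \<Rightarrow> real" where
  "Phi_quad r s A B S T X = entry_inner r s X (A * X * B) + entry_inner r s X (S * X * T)"

lemma Phi_quad_outer_mat_add: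
  assumes "A \<in> carrier_mat r r" "B \<in> carrier_mat s s" "S \<in> carrier_mat r r" "T \<in> carrier_mat s s"
    and "u1 \<in> carrier_vec r" "u2 \<in> carrier_vec r" "w1 \<in> carrier_vec s" "w2 \<in> carrier_vec s"
  shows "Phi_quad r s A B S T (outer_mat r s u1 w1 + outer_mat r s u2 w2) =
      (u1 \<bullet> (A *\<^sub>v u1)) * (w1 \<bullet> (B *\<^sub>v w1)) + (u1 \<bullet> (A *\<^sub>v u2)) * (w2 \<bullet> (B *\<^sub>v w1))
    + (u2 \<bullet> (A *\<^sub>v u1)) * (w1 \<bullet> (B *\<^sub>v w2)) + (u2 \<bullet> (A *\<^sub>v u2)) * (w2 \<bullet> (B *\<^sub>v w2))
    + (u1 \<bullet> (S *\<^sub>v u1)) * (w1 \<bullet> (T *\<^sub>v w1)) + (u1 \<bullet> (S *\<^sub>v u2)) * (w2 \<bullet> (T *\<^sub>v w1))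
    + (u2 \<bullet> (S *\<^sub>v u1)) * (w1 \<bullet> (T *\<^sub>v w2)) + (u2 \<bullet> (S *\<^sub>v u2)) * (w2 \<bullet> (T *\<^sub>v w2))"
  unfolding Phi_quad_def using assms
  by (simp add: entry_inner_sandwich_add entry_inner_outer_mat)

text \<open>The two rank-two test matrices pair the rotation planes of \<open>S\<close> (w.r.t. \<open>A\<close>) and of
  \<open>T\<close> (w.r.t. \<open>B\<close>) in the two possible orientations; their quadratic forms add up to
  \<open>(1 - l m)\<close> times a positive number.\<close>

lemma Phi_quad_rotation_pairs:
  assumes A: "sym_mat r A" and B: "sym_mat s B" and S: "antisym_mat r S" and T: "antisym_mat s T"
    and p: "p \<in> carrier_vec r" and q: "q \<in> carrier_vec r" and x: "x \<in> carrier_vec s" and y: "y \<in> carrier_vec s"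
    and Sp: "S *\<^sub>v p = (- l) \<cdot>\<^sub>v (A *\<^sub>v q)" and Sq: "S *\<^sub>v q = l \<cdot>\<^sub>v (A *\<^sub>v p)"
    and Tx: "T *\<^sub>v x = (- m) \<cdot>\<^sub>v (B *\<^sub>v y)" and Ty: "T *\<^sub>v y = m \<cdot>\<^sub>v (B *\<^sub>v x)"
  shows "Phi_quad r s A B S T (outer_mat r s p x + outer_mat r s q y) +
      Phi_quad r s A B S T (outer_mat r s q x + outer_mat r s ((-1) \<cdot>\<^sub>v p) y)
    = (1 - l * m) * (p \<bullet> (A *\<^sub>v p) + q \<bullet> (A *\<^sub>v q)) * (x \<bullet> (B *\<^sub>v x) + y \<bullet> (B *\<^sub>v y))"
proof -
  have Ac: "A \<in> carrier_mat r r" and Bc: "B \<in> carrier_mat s s" using A B unfolding sym_mat_def by auto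
  have Sc: "S \<in> carrier_mat r r" and Tc: "T \<in> carrier_mat s s" using S T unfolding antisym_mat_def by auto
  have p': "(-1) \<cdot>\<^sub>v p \<in> carrier_vec r" using p by simp
  have dims: "dim_vec p = r" "dim_vec q = r" "dim_vec x = s" "dim_vec y = s" "dim_row A = r" "dim_row B = s"
    using p q x y Ac Bc by auto
  show ?thesis
    unfolding Phi_quad_outer_mat_add[OF Ac Bc Sc Tc p q x y] Phi_quad_outer_mat_add[OF Ac Bc Sc Tc q p' x y]
    by (simp add: mult_mat_vec[OF Ac p] mult_mat_vec[OF Sc p] Sp Sq Tx Ty dims
        sym_mat_quad_commute[OF A p q] sym_mat_quad_commute[OF B x y] algebra_simps)
qed

lemma rotation_pairs_mult_le_1_if_psd_op:
  assumes A: "sym_mat r A" "pos_def_mat r A" and B: "sym_mat s B" "pos_def_mat s B"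
    and S: "antisym_mat r S" and T: "antisym_mat s T"
    and psd: "psd_op r s (Phi_op A B S T)"
    and p: "p \<in> carrier_vec r" and q: "q \<in> carrier_vec r" and nzA: "p \<noteq> 0\<^sub>v r \<or> q \<noteq> 0\<^sub>v r"
    and x: "x \<in> carrier_vec s" and y: "y \<in> carrier_vec s" and nzB: "x \<noteq> 0\<^sub>v s \<or> y \<noteq> 0\<^sub>v s"
    and Sp: "S *\<^sub>v p = (- l) \<cdot>\<^sub>v (A *\<^sub>v q)" and Sq: "S *\<^sub>v q = l \<cdot>\<^sub>v (A *\<^sub>v p)"
    and Tx: "T *\<^sub>v x = (- m) \<cdot>\<^sub>v (B *\<^sub>v y)" and Ty: "T *\<^sub>v y = m \<cdot>\<^sub>v (B *\<^sub>v x)"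
  shows "l * m \<le> 1"
proof -
  have Ac: "A \<in> carrier_mat r r" and Bc: "B \<in> carrier_mat s s" using A B unfolding sym_mat_def by auto
  have Sc: "S \<in> carrier_mat r r" and Tc: "T \<in> carrier_mat s s" using S T unfolding antisym_mat_def by auto
  have nonneg: "Phi_quad r s A B S T X \<ge> 0" if "X \<in> carrier_mat r s" for X
    using psd that frob_inner_Phi_op[OF Ac Bc Sc Tc that] unfolding psd_op_def Phi_quad_def by auto
  have "0 \<le> (1 - l * m) * (p \<bullet> (A *\<^sub>v p) + q \<bullet> (A *\<^sub>v q)) * (x \<bullet> (B *\<^sub>v x) + y \<bullet> (B *\<^sub>v y))"
    unfolding Phi_quad_rotation_pairs[OF A(1) B(1) S T p q x y Sp Sq Tx Ty, symmetric]
    by (intro add_nonneg_nonneg nonneg) auto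
  moreover have "p \<bullet> (A *\<^sub>v p) + q \<bullet> (A *\<^sub>v q) > 0" by (rule pos_def_mat_quad_add_pos[OF A(2) p q nzA])
  moreover have "x \<bullet> (B *\<^sub>v x) + y \<bullet> (B *\<^sub>v y) > 0" by (rule pos_def_mat_quad_add_pos[OF B(2) x y nzB])
  ultimately show ?thesis by (simp add: zero_le_mult_iff)
qed

lemma spectral_radius_mult_le_1_if_psd_op:
  assumes r: "r > 0" and s: "s > 0"
    and A: "sym_mat r A" "pos_def_mat r A" and B: "sym_mat s B" "pos_def_mat s B"
    and S: "antisym_mat r S" and T: "antisym_mat s T"
    and psd: "psd_op r s (Phi_op A B S T)"
  shows "real_spectral_radius (inv_mat A * S) * real_spectral_radius (T * inv_mat B) \<le> 1"
proof -
  have Sc: "S \<in> carrier_mat r r" and Tc: "T \<in> carrier_mat s s" using S T unfolding antisym_mat_def by auto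
  have Ac: "A \<in> carrier_mat r r" and Bc: "B \<in> carrier_mat s s" using A B unfolding sym_mat_def by auto
  note iA = pos_def_mat_inv[OF A(2)] and iB = pos_def_mat_inv[OF B(2)]
  obtain p q where pq: "p \<in> carrier_vec r" "q \<in> carrier_vec r" "p \<noteq> 0\<^sub>v r \<or> q \<noteq> 0\<^sub>v r"
    "S *\<^sub>v p = (- real_spectral_radius (inv_mat A * S)) \<cdot>\<^sub>v (A *\<^sub>v q)"
    "S *\<^sub>v q = real_spectral_radius (inv_mat A * S) \<cdot>\<^sub>v (A *\<^sub>v p)"
  proof (rule antisym_rotation_pair[OF r A S _ one_carrier_mat one_carrier_mat])
    show "inv_mat A * S \<in> carrier_mat r r" using iA(1) Sc by simp
    show "S * 1\<^sub>m r = A * 1\<^sub>m r * (inv_mat A * S)"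
      using Ac Sc pos_def_mat_inv_mat_cancel(1)[OF A(2) Sc] by simp
  qed (use Sc in simp_all)
  obtain x y where xy: "x \<in> carrier_vec s" "y \<in> carrier_vec s" "x \<noteq> 0\<^sub>v s \<or> y \<noteq> 0\<^sub>v s"
    "T *\<^sub>v x = (- real_spectral_radius (T * inv_mat B)) \<cdot>\<^sub>v (B *\<^sub>v y)"
    "T *\<^sub>v y = real_spectral_radius (T * inv_mat B) \<cdot>\<^sub>v (B *\<^sub>v x)"
  proof (rule antisym_rotation_pair[OF s B T _ iB(1) Bc iB(2)])
    show "T * inv_mat B \<in> carrier_mat s s" using iB(1) Tc by simp
    show "T * inv_mat B = B * inv_mat B * (T * inv_mat B)" using iB(1,2) Tc by simp
  qed
  show ?thesis by (rule rotation_pairs_mult_le_1_if_psd_op[OF A B S T psd pq(1-3) xy(1-3) pq(4,5) xy(4,5)])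
qed

theorem lemma6:
  fixes r s :: nat and \<alpha> \<beta> \<sigma> \<tau> :: "real mat"
  assumes "r > 0" and "s > 0"
    and "sym_mat r \<alpha>" and "sym_mat s \<beta>"
    and "pos_def_mat r \<alpha>" and "pos_def_mat s \<beta>"
    and "antisym_mat r \<sigma>" and "antisym_mat s \<tau>"
  shows "psd_op r s (Phi_op \<alpha> \<beta> \<sigma> \<tau>) \<longleftrightarrow>
    real_spectral_radius (inv_mat \<alpha> * \<sigma>) * real_spectral_radius (\<tau> * inv_mat \<beta>) \<le> 1"
  using spectral_radius_mult_le_1_if_psd_op[of r s \<alpha> \<beta> \<sigma> \<tau>]
    psd_op_if_spectral_radius_le[of r s \<alpha> \<beta> \<sigma> \<tau>] assms
  by blast

end
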